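(* Let $p\geq1$, let $G$ be a discrete group with identity $e$, let $a\in G$, and let $\mu$ be a left Haar measure on $G$ with $\mu(\{e\})\geq 1$. Let $(\gamma_n)_n$ be an unbounded sequence of non-negative integers and let $w:G\to(0,\infty)$ be a bounded function. Suppose there are a finite nonempty set $F\subseteq G$ and $N>0$ such that $a^{\gamma_n}F\cap F=\varnothing$ for all $n\geq N$ and $$\beta:=\inf\Big\{\prod_{k=1}^{\gamma_n}w(a^k t):\ n\geq N,\ t\in F\Big\}>0.$$ Then the set $$\Lambda:=\big\{f\in L^p(G,\mu):\ \|T_{a,w,p}^{\gamma_n}f-\chi_F\|_p\geq\mu(F)^{1/p}\ \text{ for all } n\geq N\big\}$$ is not $\sigma$-porous in $L^p(G,\mu)$.
   Context: For $a\in G$ and a bounded weight $w:G\to(0,\infty)$, the weighted translation operator $T_{a,w,p}:L^p(G,\mu)\to L^p(G,\mu)$ is $(T_{a,w,p}f)(x)=w(x)\,f(a^{-1}x)$; $T_{a,w,p}^n$ denotes its $n$-th power ($T^0=I$). Porosity: Let $X$ be a metric space and $0<\lambda<1$. A set $E\subseteq X$ is $\lambda$-porous at $x\in E$ if for each $\delta>0$ there is $y\in B(x;\delta)\setminus\{x\}$ with $B(y;\lambda\, d(x,y))\cap E=\varnothing$; $E$ is $\lambda$-porous if it is $\lambda$-porous at each of its points; $E$ is $\sigma$-$\lambda$-porous if it is a countable union of $\lambda$-porous subsets of $X$. A set is called $\sigma$-porous if it is $\sigma$-$\lambda$-porous for some $\lambda\in(0,1)$; "not $\sigma$-porous" means not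 $\sigma$-$\lambda$-porous for any $\lambda\in(0,1)$. *)

theory Defs
  imports "HOL-Analysis.Analysis"
begin

definition lambda_porous_at :: "'a set \<Rightarrow> ('a \<Rightarrow> 'a \<Rightarrow> real) \<Rightarrow> real \<Rightarrow> 'a set \<Rightarrow> 'a \<Rightarrow> bool" where
  "lambda_porous_at X d lam E x \<longleftrightarrow>
     (\<forall>\<delta>>0. \<exists>y\<in>X. d x y < \<delta> \<and> y \<noteq> x \<and>
        (\<forall>z\<in>X. d y z < lam * d x y \<longrightarrow> z \<notin> E))"

definition lambda_porous :: "'a set \<Rightarrow> ('a \<Rightarrow> 'a \<Rightarrow> real) \<Rightarrow> real \<Rightarrow> 'a set \<Rightarrow> bool" where
  "lambda_porous X d lam E \<longleftrightarrow> E \<subseteq> X \<and> (\<forall>x\<in>E. lambda_porous_at X d lam E x)"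

definition sigma_lambda_porous :: "'a set \<Rightarrow> ('a \<Rightarrow> 'a \<Rightarrow> real) \<Rightarrow> real \<Rightarrow> 'a set \<Rightarrow> bool" where
  "sigma_lambda_porous X d lam E \<longleftrightarrow>
     (\<exists>A :: nat \<Rightarrow> 'a set. (\<forall>n. lambda_porous X d lam (A n)) \<and> E = (\<Union>n. A n))"

definition sigma_porous :: "'a set \<Rightarrow> ('a \<Rightarrow> 'a \<Rightarrow> real) \<Rightarrow> 'a set \<Rightarrow> bool" where
  "sigma_porous X d E \<longleftrightarrow> (\<exists>lam. 0 < lam \<and> lam < 1 \<and> sigma_lambda_porous X d lam E)"

text \<open>Left Haar measure on a discrete group (group written additively via group_add,
  which need not be commutative): all subsets measurable, left invariant,
  Radon (finite on compact = finite sets, inner regular on open = all sets).\<close>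

definition discrete_left_haar :: "'g::group_add measure \<Rightarrow> bool" where
  "discrete_left_haar M \<longleftrightarrow>
     sets M = sets (count_space UNIV) \<and>
     (\<forall>g A. emeasure M ((\<lambda>x. g + x) ` A) = emeasure M A) \<and>
     (\<forall>K. finite K \<longrightarrow> emeasure M K < \<infinity>) \<and>
     (\<forall>A. emeasure M A = (SUP K \<in> {K. finite K \<and> K \<subseteq> A}. emeasure M K)) \<and>
     emeasure M UNIV \<noteq> 0"

definition Lp_space :: "'g measure \<Rightarrow> real \<Rightarrow> ('g \<Rightarrow> complex) set" where
  "Lp_space M p = {f. f \<in> borel_measurable M \<and> integrable M (\<lambda>x. norm (f x) powr p)}"

definition Lp_norm :: "'g measure \<Rightarrow> real \<Rightarrow> ('g \<Rightarrow> complex) \<Rightarrow> real" where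
  "Lp_norm M p f = (\<integral>x. norm (f x) powr p \<partial>M) powr (1 / p)"

definition Lp_dist :: "'g measure \<Rightarrow> real \<Rightarrow> ('g \<Rightarrow> complex) \<Rightarrow> ('g \<Rightarrow> complex) \<Rightarrow> real" where
  "Lp_dist M p f g = Lp_norm M p (\<lambda>x. f x - g x)"

text \<open>Weighted translation (T f)(x) = w(x) f(a^{-1} x); a^{-1} x is written -a + x.\<close>

definition weighted_translation :: "'g::group_add \<Rightarrow> ('g \<Rightarrow> real) \<Rightarrow> ('g \<Rightarrow> complex) \<Rightarrow> ('g \<Rightarrow> complex)" where
  "weighted_translation a w f = (\<lambda>x. complex_of_real (w x) * f (- a + x))"

text \<open>Group power a^k acting by left multiplication: a^k t = (plus a ^^ k) t.\<close>

end

theory Submission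
  imports Defs
begin

text \<open>Since every point of G has mass at least 1, point evaluation is bounded by the
  L^p norm; hence L^p(G) is a complete metric space in which close functions are pointwise
  close. Fix t in F and let f0 = (R + 1) 1_{t} with R = \<mu>(F)^(1/p) / \<beta>. Every g within
  distance 1 of f0 satisfies |g(t)| > R. For n \<ge> N the operator T^(\<gamma> n) moves the value
  g(t) to the point a^(\<gamma> n) t outside F, multiplied by a product of weights that is at least
  \<beta>; so T^(\<gamma> n) g has distance at least \<beta> |g(t)| > \<mu>(F)^(1/p) from the indicator of F.
  Thus \<Lambda> contains a ball. On the other hand porous sets are nowhere dense, so by the Baire
  category theorem a \<sigma>-porous subset of a complete metric space has empty interior.\<close>

section \<open>Minkowski's inequality and Fatou's lemma in L^p\<close>

lemma powr_convex_nonneg: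
  assumes "p \<ge> 1"
  shows "convex_on {0..} (\<lambda>x::real. x powr p)"
proof (rule convex_on_linorderI)
  fix t x y :: real
  assume t: "0 < t" "t < 1" and xy: "x \<in> {0..}" "y \<in> {0..}" "x < y"
  show "((1 - t) *\<^sub>R x + t *\<^sub>R y) powr p \<le> (1 - t) * x powr p + t * y powr p"
  proof (cases "x = 0")
    case True
    have "t powr p \<le> t"
      using t assms by (metis less_imp_le powr_mono' powr_one_gt_zero_iff)
    then have "t powr p * y powr p \<le> t * y powr p"
      by (intro mult_right_mono) auto
    then show ?thesis
      using True t xy by (simp add: powr_mult)
  next
    case False
    then show ?thesis
      using convex_onD[OF powr_convex[OF assms], of t x y] t xy by simp
  qed
qed simp

text \<open>With \<open>A\<close>, \<open>B\<close> the norms of \<open>u\<close>, \<open>v\<close>, integrating this inequality gives Minkowski's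
  inequality.\<close>

lemma powr_add_le_weighted:
  fixes a b A B p :: real
  assumes "p \<ge> 1" "0 \<le> a" "0 \<le> b" "0 < A" "0 < B"
  shows "(a + b) powr p \<le> (A + B) powr (p - 1) * (a powr p / A powr (p - 1) + b powr p / B powr (p - 1))"
proof -
  define t where "t = B / (A + B)"
  have t: "0 \<le> t" "t \<le> 1" "1 - t = A / (A + B)"
    using assms by (auto simp: t_def field_simps)
  have "(1 - t) * (a / A) = a / (A + B)" "t * (b / B) = b / (A + B)"
    using assms unfolding t(3) by (simp_all add: t_def)
  then have "a + b = (A + B) * ((1 - t) *\<^sub>R (a / A) + t *\<^sub>R (b / B))"
    using assms by (simp add: add_divide_distrib[symmetric])
  then have "(a + b) powr p = (A + B) powr p * ((1 - t) *\<^sub>R (a / A) + t *\<^sub>R (b / B)) powr p"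
    using assms t by (simp add: powr_mult)
  also have "\<dots> \<le> (A + B) powr p * ((1 - t) * (a / A) powr p + t * (b / B) powr p)"
    using assms t by (intro mult_left_mono convex_onD[OF powr_convex_nonneg]) auto
  also have "\<dots> = (A + B) powr (p - 1) * (a powr p / A powr (p - 1) + b powr p / B powr (p - 1))"
  proof -
    have summand: "(A + B) powr p * (C / (A + B) * (c / C) powr p) = (A + B) powr (p - 1) * (c powr p / C powr (p - 1))"
      if "0 \<le> c" "0 < C" for c C
      using assms that by (simp add: powr_diff powr_divide field_simps)
    show ?thesis
      using summand assms t(3) unfolding t_def distrib_left by simp
  qed
  finally show ?thesis .
qed

lemma Lp_norm_nonneg: "Lp_norm M p f \<ge> 0"
  by (simp add: Lp_norm_def)

lemma Lp_norm_powr: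
  assumes "p > 0"
  shows "Lp_norm M p f powr p = (\<integral>x. norm (f x) powr p \<partial>M)"
  using assms by (simp add: Lp_norm_def powr_powr integral_nonneg_AE)

lemma Lp_space_cmult:
  assumes "f \<in> Lp_space M p"
  shows "(\<lambda>x. c * f x) \<in> Lp_space M p"
proof -
  have "integrable M (\<lambda>x. norm c powr p * norm (f x) powr p)"
    using assms by (intro integrable_mult_right) (simp add: Lp_space_def)
  then show ?thesis
    using assms by (simp add: Lp_space_def norm_mult powr_mult borel_measurable_times)
qed

lemma Lp_space_add:
  assumes "p \<ge> 1" "u \<in> Lp_space M p" "v \<in> Lp_space M p"
  shows "(\<lambda>x. u x + v x) \<in> Lp_space M p"
proof -
  have "integrable M (\<lambda>x. 2 powr (p - 1) * (norm (u x) powr p + norm (v x) powr p))"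
    using assms by (intro integrable_mult_right Bochner_Integration.integrable_add) (auto simp: Lp_space_def)
  moreover have "norm (u x + v x) powr p \<le> 2 powr (p - 1) * (norm (u x) powr p + norm (v x) powr p)" for x
  proof -
    have "norm (u x + v x) powr p \<le> (norm (u x) + norm (v x)) powr p"
      using assms by (intro powr_mono2) (auto simp: norm_triangle_ineq)
    also have "\<dots> \<le> 2 powr (p - 1) * (norm (u x) powr p + norm (v x) powr p)"
      using powr_add_le_weighted[OF assms(1), of "norm (u x)" "norm (v x)" 1 1] by simp
    finally show ?thesis .
  qed
  ultimately show ?thesis
    using assms unfolding Lp_space_def
    by (auto intro: Bochner_Integration.integrable_bound[where f = "\<lambda>x. 2 powr (p - 1) * (norm (u x) powr p + norm (v x) powr p)"])
qed

lemma Lp_space_diff: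
  assumes "p \<ge> 1" "u \<in> Lp_space M p" "v \<in> Lp_space M p"
  shows "(\<lambda>x. u x - v x) \<in> Lp_space M p"
  using Lp_space_add[OF assms(1,2) Lp_space_cmult[OF assms(3), of "-1"]] by simp

lemma Lp_norm_add_le:
  assumes "p \<ge> 1" "u \<in> Lp_space M p" "v \<in> Lp_space M p"
  shows "Lp_norm M p (\<lambda>x. u x + v x) \<le> Lp_norm M p u + Lp_norm M p v"
proof (rule field_le_epsilon)
  fix e :: real assume "e > 0"
  define A B where "A = Lp_norm M p u + e / 2" and "B = Lp_norm M p v + e / 2"
  have AB: "A > 0" "B > 0"
    using \<open>e > 0\<close> Lp_norm_nonneg[of M p u] Lp_norm_nonneg[of M p v] by (simp_all add: A_def B_def)
  have "(\<integral>x. norm (u x) powr p \<partial>M) \<le> A powr p" "(\<integral>x. norm (v x) powr p \<partial>M) \<le> B powr p"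
    using assms(1) \<open>e > 0\<close> Lp_norm_nonneg
    by (auto simp: Lp_norm_powr[symmetric] A_def B_def intro!: powr_mono2)
  then have le: "(\<integral>x. norm (u x) powr p \<partial>M) / A powr (p - 1) \<le> A"
    "(\<integral>x. norm (v x) powr p \<partial>M) / B powr (p - 1) \<le> B"
    using AB by (simp_all add: divide_le_eq powr_diff)
  have pointwise: "norm (u x + v x) powr p
      \<le> (A + B) powr (p - 1) * (norm (u x) powr p / A powr (p - 1) + norm (v x) powr p / B powr (p - 1))" for x
    using assms(1) AB
    by (intro order.trans[OF powr_mono2 powr_add_le_weighted] norm_triangle_ineq) auto
  have "(\<integral>x. norm (u x + v x) powr p \<partial>M)
      \<le> (\<integral>x. (A + B) powr (p - 1) * (norm (u x) powr p / A powr (p - 1) + norm (v x) powr p / B powr (p - 1)) \<partial>M)"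
    using assms Lp_space_add[OF assms]
    by (intro integral_mono pointwise integrable_mult_right Bochner_Integration.integrable_add
        integrable_divide) (auto simp: Lp_space_def)
  also have "\<dots> = (A + B) powr (p - 1) * ((\<integral>x. norm (u x) powr p \<partial>M) / A powr (p - 1) + (\<integral>x. norm (v x) powr p \<partial>M) / B powr (p - 1))"
    using assms by (simp add: Lp_space_def)
  also have "\<dots> \<le> (A + B) powr (p - 1) * (A + B)"
    using le by (intro mult_left_mono) auto
  also have "\<dots> = (A + B) powr p"
    using AB by (simp add: powr_diff)
  finally have "Lp_norm M p (\<lambda>x. u x + v x) \<le> ((A + B) powr p) powr (1 / p)"
    unfolding Lp_norm_def using assms(1) by (intro powr_mono2) (auto simp: integral_nonneg_AE)
  also have "\<dots> = A + B"
    using AB assms(1) by (simp add: powr_powr)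
  finally show "Lp_norm M p (\<lambda>x. u x + v x) \<le> Lp_norm M p u + Lp_norm M p v + e"
    by (simp add: A_def B_def)
qed

lemma Lp_norm_le_of_pointwise_limit:
  assumes "p > 0" and g: "\<And>j. g j \<in> Lp_space M p"
    and lim: "\<And>x. (\<lambda>j. g j x) \<longlonglongrightarrow> h x"
    and bound: "eventually (\<lambda>j. Lp_norm M p (g j) \<le> r) sequentially"
  shows "h \<in> Lp_space M p" "Lp_norm M p h \<le> r"
proof -
  obtain J where "Lp_norm M p (g J) \<le> r"
    using bound by (auto simp: eventually_sequentially)
  then have r: "r \<ge> 0"
    using Lp_norm_nonneg order.trans by blast
  have g_meas[measurable]: "g j \<in> borel_measurable M" for j
    using g by (simp add: Lp_space_def)
  have meas: "h \<in> borel_measurable M"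
    using lim by (rule borel_measurable_LIMSEQ_metric[OF g_meas])
  have "(\<integral>\<^sup>+x. ennreal (norm (h x) powr p) \<partial>M) = (\<integral>\<^sup>+x. liminf (\<lambda>j. ennreal (norm (g j x) powr p)) \<partial>M)"
    using assms(1) lim
    by (intro nn_integral_cong lim_imp_Liminf[symmetric] tendsto_ennrealI tendsto_powr' tendsto_norm) auto
  also have "\<dots> \<le> liminf (\<lambda>j. \<integral>\<^sup>+x. ennreal (norm (g j x) powr p) \<partial>M)"
    by (intro nn_integral_liminf) measurable
  also have "\<dots> \<le> ennreal (r powr p)"
  proof (intro Liminf_le eventually_mono[OF bound])
    fix j assume "Lp_norm M p (g j) \<le> r"
    then have "(\<integral>x. norm (g j x) powr p \<partial>M) \<le> r powr p"
      using assms(1) by (auto simp: Lp_norm_powr[symmetric] Lp_norm_nonneg intro: powr_mono2)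
    then show "(\<integral>\<^sup>+x. ennreal (norm (g j x) powr p) \<partial>M) \<le> ennreal (r powr p)"
      using g[of j] by (subst nn_integral_eq_integral) (auto simp: Lp_space_def)
  qed simp
  finally have nn: "(\<integral>\<^sup>+x. ennreal (norm (h x) powr p) \<partial>M) \<le> ennreal (r powr p)" .
  then have int: "integrable M (\<lambda>x. norm (h x) powr p)"
    unfolding integrable_iff_bounded using meas by (simp add: le_less_trans[OF nn])
  then show "h \<in> Lp_space M p"
    using meas by (simp add: Lp_space_def)
  have "(\<integral>x. norm (h x) powr p \<partial>M) \<le> r powr p"
    using nn int by (simp add: nn_integral_eq_integral)
  then have "Lp_norm M p h \<le> (r powr p) powr (1 / p)"
    unfolding Lp_norm_def using assms(1) by (intro powr_mono2) (auto simp: integral_nonneg_AE)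
  then show "Lp_norm M p h \<le> r"
    using assms(1) r by (simp add: powr_powr)
qed

lemma Lp_dist_le_of_pointwise_limit:
  assumes "p \<ge> 1" and g: "\<And>j. g j \<in> Lp_space M p"
    and lim: "\<And>x. (\<lambda>j. g j x) \<longlonglongrightarrow> h x"
    and bound: "eventually (\<lambda>j. Lp_dist M p (g j) u \<le> r) sequentially" and u: "u \<in> Lp_space M p"
  shows "h \<in> Lp_space M p" "Lp_dist M p h u \<le> r"
proof -
  have "p > 0"
    using assms(1) by simp
  note diff = Lp_norm_le_of_pointwise_limit[OF \<open>p > 0\<close> Lp_space_diff[OF assms(1) g u]
      tendsto_diff[OF lim tendsto_const] bound[unfolded Lp_dist_def]]
  show "Lp_dist M p h u \<le> r"
    using diff(2) by (simp add: Lp_dist_def)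
  have "h = (\<lambda>x. (h x - u x) + u x)"
    by simp
  then show "h \<in> Lp_space M p"
    using Lp_space_add[OF assms(1) diff(1) u] by simp
qed

section \<open>Porosity and Baire category\<close>

lemma (in Metric_space) lambda_porous_nowhere_dense:
  assumes "0 < lam" and porous: "lambda_porous M d lam A"
  shows "mtopology interior_of (mtopology closure_of A) = {}"
proof (rule ccontr)
  assume "mtopology interior_of (mtopology closure_of A) \<noteq> {}"
  then obtain x where x: "x \<in> mtopology interior_of (mtopology closure_of A)"
    by blast
  then obtain r where "r > 0" and ball: "mball x r \<subseteq> mtopology closure_of A"
    by (meson openin_interior_of openin_mtopology interior_of_subset subset_trans)
  have "x \<in> M"
    using x interior_of_subset_topspace by fastforce
  then have "x \<in> mtopology closure_of A"
    using ball \<open>r > 0\<close> by auto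
  then have "\<exists>z\<in>A. z \<in> mball x (r / 2)"
    using \<open>r > 0\<close> unfolding metric_closure_of mem_Collect_eq by (meson half_gt_zero)
  then obtain z where "z \<in> A" "z \<in> mball x (r / 2)"
    by blast
  then have z: "z \<in> A" "z \<in> M" "d x z < r / 2"
    by auto
  then obtain y where y: "y \<in> M" "d z y < r / 2" "y \<noteq> z"
    and hole: "\<forall>a\<in>M. d y a < lam * d z y \<longrightarrow> a \<notin> A"
    using porous \<open>r > 0\<close> unfolding lambda_porous_def lambda_porous_at_def by (meson half_gt_zero)
  have "d x y < r"
    using triangle[OF \<open>x \<in> M\<close> \<open>z \<in> M\<close> \<open>y \<in> M\<close>] z y by linarith
  then have "y \<in> mtopology closure_of A"
    using ball \<open>x \<in> M\<close> \<open>y \<in> M\<close> by auto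
  moreover have "0 < lam * d z y"
    using \<open>0 < lam\<close> y z by (simp add: order.not_eq_order_implies_strict)
  ultimately obtain a where "a \<in> A" "a \<in> mball y (lam * d z y)"
    unfolding metric_closure_of by blast
  then show False
    using hole by auto
qed

lemma (in Metric_space) not_sigma_porous_if_mball_subset:
  assumes "mcomplete" and "x \<in> M" "0 < r" "mball x r \<subseteq> E"
  shows "\<not> sigma_porous M d E"
proof
  assume "sigma_porous M d E"
  then obtain lam where "0 < lam" and lam_porous: "sigma_lambda_porous M d lam E"
    by (auto simp: sigma_porous_def)
  from lam_porous obtain A :: "nat \<Rightarrow> 'a set"
    where porous: "\<And>n. lambda_porous M d lam (A n)" and E: "E = (\<Union>n. A n)"
    unfolding sigma_lambda_porous_def by blast
  have "mtopology interior_of (\<Union>n. mtopology closure_of A n) = {}"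
    using \<open>mcomplete\<close> lambda_porous_nowhere_dense[OF \<open>0 < lam\<close> porous]
    by (intro metric_Baire_category_alt[where \<G> = "range (\<lambda>n. mtopology closure_of A n)", simplified]) auto
  moreover have "A n \<subseteq> mtopology closure_of A n" for n
    using porous[of n] by (simp add: lambda_porous_def closure_of_subset)
  then have "E \<subseteq> (\<Union>n. mtopology closure_of A n)"
    unfolding E by (intro UN_mono) auto
  then have "mball x r \<subseteq> (\<Union>n. mtopology closure_of A n)"
    using \<open>mball x r \<subseteq> E\<close> by (rule subset_trans[rotated])
  then have "mball x r \<subseteq> mtopology interior_of (\<Union>n. mtopology closure_of A n)"
    by (simp add: interior_of_maximal)
  ultimately show False
    using assms(2,3) by auto
qed

section \<open>L^p spaces over a measure with atoms of mass at least one\<close>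

locale discrete_Lp =
  fixes M :: "'g measure" and p :: real
  assumes p_ge_1: "p \<ge> 1"
    and sets_eq_count_space: "sets M = sets (count_space UNIV)"
    and emeasure_singleton_ge_1: "\<And>x. 1 \<le> emeasure M {x}"
begin

lemma norm_le_Lp_norm:
  assumes "f \<in> Lp_space M p"
  shows "norm (f x) \<le> Lp_norm M p f"
proof -
  have int: "integrable M (\<lambda>y. norm (f y) powr p)"
    using assms by (simp add: Lp_space_def)
  have "ennreal (norm (f x) powr p) \<le> ennreal (norm (f x) powr p) * emeasure M {x}"
    using mult_left_mono[OF emeasure_singleton_ge_1[of x]] by simp
  also have "\<dots> = (\<integral>\<^sup>+y. ennreal (norm (f x) powr p) * indicator {x} y \<partial>M)"
    using sets_eq_count_space by (simp add: nn_integral_cmult_indicator)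
  also have "\<dots> \<le> (\<integral>\<^sup>+y. ennreal (norm (f y) powr p) \<partial>M)"
    by (intro nn_integral_mono) (auto split: split_indicator)
  also have "\<dots> = ennreal (\<integral>y. norm (f y) powr p \<partial>M)"
    using int by (intro nn_integral_eq_integral) auto
  finally have "norm (f x) powr p \<le> Lp_norm M p f powr p"
    using p_ge_1 by (simp add: Lp_norm_powr integral_nonneg_AE)
  then show ?thesis
    using p_ge_1 Lp_norm_nonneg[of M p f] powr_less_mono2[of p "Lp_norm M p f" "norm (f x)"]
    by linarith
qed

lemma dist_le_Lp_dist:
  assumes "f \<in> Lp_space M p" "g \<in> Lp_space M p"
  shows "norm (f x - g x) \<le> Lp_dist M p f g"
  unfolding Lp_dist_def using p_ge_1 assms by (intro norm_le_Lp_norm Lp_space_diff)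

sublocale Lp: Metric_space "Lp_space M p" "Lp_dist M p"
proof
  fix f g h
  show "0 \<le> Lp_dist M p f g"
    by (simp add: Lp_dist_def Lp_norm_nonneg)
  show "Lp_dist M p f g = Lp_dist M p g f"
    by (simp add: Lp_dist_def Lp_norm_def norm_minus_commute)
  assume X: "f \<in> Lp_space M p" "g \<in> Lp_space M p" "h \<in> Lp_space M p"
  show "Lp_dist M p f g = 0 \<longleftrightarrow> f = g"
    using dist_le_Lp_dist[OF X(1,2)] by (auto simp: Lp_dist_def Lp_norm_def)
  show "Lp_dist M p f h \<le> Lp_dist M p f g + Lp_dist M p g h"
    using Lp_norm_add_le[OF p_ge_1 Lp_space_diff[OF p_ge_1 X(1,2)] Lp_space_diff[OF p_ge_1 X(2,3)]]
    by (simp add: Lp_dist_def)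
qed

lemma MCauchy_imp_Cauchy_pointwise:
  assumes "Lp.MCauchy \<sigma>"
  shows "Cauchy (\<lambda>n. \<sigma> n x)"
proof (rule metric_CauchyI)
  fix e :: real assume "e > 0"
  then obtain N where N: "\<forall>n n'. N \<le> n \<longrightarrow> N \<le> n' \<longrightarrow> Lp_dist M p (\<sigma> n) (\<sigma> n') < e"
    using assms unfolding Lp.MCauchy_def by blast
  have X: "\<sigma> n \<in> Lp_space M p" for n
    using assms unfolding Lp.MCauchy_def by blast
  have "dist (\<sigma> m x) (\<sigma> n x) < e" if "N \<le> m" "N \<le> n" for m n
    using dist_le_Lp_dist[OF X[of m] X[of n], of x] N that unfolding dist_norm
    by (meson le_less_trans)
  then show "\<exists>N. \<forall>m\<ge>N. \<forall>n\<ge>N. dist (\<sigma> m x) (\<sigma> n x) < e"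
    by blast
qed

lemma Lp_mcomplete: "Lp.mcomplete"
  unfolding Lp.mcomplete_def
proof (intro allI impI)
  fix \<sigma> assume \<sigma>: "Lp.MCauchy \<sigma>"
  then have X: "\<And>n. \<sigma> n \<in> Lp_space M p"
    unfolding Lp.MCauchy_def by blast
  have cauchy: "\<And>e. e > 0 \<Longrightarrow> \<exists>N. \<forall>n n'. N \<le> n \<longrightarrow> N \<le> n' \<longrightarrow> Lp_dist M p (\<sigma> n) (\<sigma> n') < e"
    using \<sigma> unfolding Lp.MCauchy_def by blast
  define f where "f x = lim (\<lambda>n. \<sigma> n x)" for x
  have lim: "(\<lambda>n. \<sigma> n x) \<longlonglongrightarrow> f x" for x
    using MCauchy_imp_Cauchy_pointwise[OF \<sigma>, of x]
    by (simp add: f_def Cauchy_convergent_iff convergent_LIMSEQ_iff)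
  have close: "f \<in> Lp_space M p \<and> (\<forall>n\<ge>N. Lp_dist M p (\<sigma> n) f \<le> e)"
    if N: "\<forall>n n'. N \<le> n \<longrightarrow> N \<le> n' \<longrightarrow> Lp_dist M p (\<sigma> n) (\<sigma> n') < e" for N e
  proof -
    have ev: "eventually (\<lambda>j. Lp_dist M p (\<sigma> j) (\<sigma> n) \<le> e) sequentially" if "N \<le> n" for n
      using N that unfolding eventually_sequentially by (meson less_imp_le)
    have "Lp_dist M p (\<sigma> n) f \<le> e" if "N \<le> n" for n
      using Lp_dist_le_of_pointwise_limit(2)[OF p_ge_1 X lim ev[OF that] X] Lp.commute by simp
    then show ?thesis
      using Lp_dist_le_of_pointwise_limit(1)[OF p_ge_1 X lim ev[OF order.refl] X] by blast
  qed
  have "limitin Lp.mtopology \<sigma> f sequentially"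
    unfolding Lp.limit_metric_sequentially
  proof (intro conjI allI impI)
    obtain N where "\<forall>n n'. N \<le> n \<longrightarrow> N \<le> n' \<longrightarrow> Lp_dist M p (\<sigma> n) (\<sigma> n') < 1"
      using cauchy[of 1] by auto
    then show "f \<in> Lp_space M p"
      using close by blast
    fix e :: real assume "e > 0"
    then obtain N where "\<forall>n n'. N \<le> n \<longrightarrow> N \<le> n' \<longrightarrow> Lp_dist M p (\<sigma> n) (\<sigma> n') < e / 2"
      using cauchy[of "e / 2"] by auto
    then have "Lp_dist M p (\<sigma> n) f < e" if "N \<le> n" for n
      using close that \<open>e > 0\<close> by fastforce
    then show "\<exists>N. \<forall>n\<ge>N. \<sigma> n \<in> Lp_space M p \<and> Lp_dist M p (\<sigma> n) f < e"
      using X by blast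
  qed
  then show "\<exists>f. limitin Lp.mtopology \<sigma> f sequentially"
    by blast
qed

lemma norm_gt_if_mem_mball_point_mass:
  assumes "g \<in> Lp.mball (\<lambda>x. complex_of_real (R + 1) * indicator {t} x) 1" "0 \<le> R"
  shows "R < norm (g t)"
proof -
  have "norm (complex_of_real (R + 1) * indicator {t} t - g t) < 1"
    using assms(1) dist_le_Lp_dist[of _ g t] by fastforce
  then show ?thesis
    using assms(2) norm_triangle_ineq2[of "complex_of_real (R + 1)" "g t"] by simp
qed

end

section \<open>Haar measure and weighted translations on a discrete group\<close>

lemma discrete_left_haar_imp_discrete_Lp:
  fixes M :: "'g::group_add measure"
  assumes "discrete_left_haar M" "1 \<le> emeasure M {0}" "1 \<le> p"
  shows "discrete_Lp M p"
proof
  have invariant: "emeasure M ((\<lambda>y. x + y) ` A) = emeasure M A" for x A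
    using assms(1) unfolding discrete_left_haar_def by blast
  show "1 \<le> emeasure M {x}" for x
    using invariant[of x "{0}"] assms(2) by simp
  show "sets M = sets (count_space UNIV)"
    using assms(1) unfolding discrete_left_haar_def by blast
qed (rule assms(3))

lemma distr_left_translation:
  fixes M :: "'g::group_add measure"
  assumes "discrete_left_haar M"
  shows "distr M M (\<lambda>x. - a + x) = M"
proof (rule measure_eqI)
  have discrete: "sets M = sets (count_space UNIV)"
    and invariant: "emeasure M ((\<lambda>x. a + x) ` A) = emeasure M A" for A
    using assms unfolding discrete_left_haar_def by blast+
  have space: "space M = UNIV"
    using sets_eq_imp_space_eq[OF discrete] by simp
  have meas: "(\<lambda>x. - a + x) \<in> M \<rightarrow>\<^sub>M M"
    using discrete space by (simp add: measurable_def)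
  fix A assume "A \<in> sets (distr M M (\<lambda>x. - a + x))"
  have "(\<lambda>x. - a + x) -` A \<inter> space M = (\<lambda>x. a + x) ` A"
    by (auto simp: space image_iff) (metis add_minus_cancel)
  then show "emeasure (distr M M (\<lambda>x. - a + x)) A = emeasure M A"
    using discrete by (subst emeasure_distr[OF meas]) (simp_all add: invariant)
qed simp

lemma Lp_space_weighted_translation:
  fixes M :: "'g::group_add measure"
  assumes "p \<ge> 0" and haar: "discrete_left_haar M"
    and bounded: "\<And>x. \<bar>w x\<bar> \<le> W" and f: "f \<in> Lp_space M p"
  shows "weighted_translation a w f \<in> Lp_space M p"
proof -
  have discrete: "sets M = sets (count_space UNIV)"
    using haar unfolding discrete_left_haar_def by blast
  have meas: "(\<lambda>x. - a + x) \<in> M \<rightarrow>\<^sub>M M" "h \<in> borel_measurable M" for h :: "'g \<Rightarrow> complex"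
    using discrete sets_eq_imp_space_eq[OF discrete] by (simp_all add: measurable_def space_borel)
  have "integrable (distr M M (\<lambda>x. - a + x)) (\<lambda>x. norm (f x) powr p)"
    using f by (simp add: distr_left_translation[OF haar] Lp_space_def)
  then have "integrable M (\<lambda>x. W powr p * norm (f (- a + x)) powr p)"
    using meas by (intro integrable_mult_right) (simp add: integrable_distr_eq)
  moreover have "norm (weighted_translation a w f x) powr p \<le> W powr p * norm (f (- a + x)) powr p" for x
    using bounded[of x] \<open>p \<ge> 0\<close>
    by (auto simp: weighted_translation_def norm_mult powr_mult intro!: mult_right_mono powr_mono2)
  ultimately show ?thesis
    unfolding Lp_space_def using meas
    by (auto intro: Bochner_Integration.integrable_bound[where f = "\<lambda>x. W powr p * norm (f (- a + x)) powr p"])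
qed

lemma Lp_space_indicator_finite:
  fixes M :: "'g::group_add measure"
  assumes "discrete_left_haar M" "finite K"
  shows "(\<lambda>x. indicator K x :: complex) \<in> Lp_space M p"
proof -
  have "sets M = sets (count_space UNIV)" "emeasure M K < \<infinity>"
    using assms unfolding discrete_left_haar_def by blast+
  moreover have "norm (indicator K x :: complex) powr p = indicator K x" for x
    by (simp split: split_indicator)
  ultimately show ?thesis
    by (simp add: Lp_space_def borel_measurable_indicator measurable_def)
qed

lemma weighted_translation_iter_orbit:
  fixes a :: "'g::group_add"
  shows "(weighted_translation a w ^^ m) f ((plus a ^^ m) t)
    = complex_of_real (\<Prod>k=1..m. w ((plus a ^^ k) t)) * f t"
proof (induction m)
  case (Suc m)
  have "(weighted_translation a w ^^ Suc m) f ((plus a ^^ Suc m) t)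
      = complex_of_real (w ((plus a ^^ Suc m) t)) * (weighted_translation a w ^^ m) f ((plus a ^^ m) t)"
    by (simp add: weighted_translation_def add.assoc[symmetric])
  then show ?case
    using Suc by (simp add: prod.nat_ivl_Suc' mult.assoc)
qed simp

lemma Lp_norm_iter_weighted_translation_diff_indicator_ge:
  fixes M :: "'g::group_add measure"
  assumes "discrete_Lp M p" "discrete_left_haar M" "\<And>x. \<bar>w x\<bar> \<le> W"
    and "finite F" "(plus a ^^ m) t \<notin> F" "g \<in> Lp_space M p"
  shows "\<bar>\<Prod>k=1..m. w ((plus a ^^ k) t)\<bar> * norm (g t)
    \<le> Lp_norm M p (\<lambda>x. (weighted_translation a w ^^ m) g x - indicator F x)"
proof -
  interpret discrete_Lp M p
    by (rule assms(1))
  have "(weighted_translation a w ^^ m) g \<in> Lp_space M p"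
    using p_ge_1 assms(6) by (induction m) (simp_all add: Lp_space_weighted_translation[OF _ assms(2,3)])
  then have "(\<lambda>x. (weighted_translation a w ^^ m) g x - indicator F x) \<in> Lp_space M p"
    using p_ge_1 Lp_space_indicator_finite[OF assms(2,4)] by (intro Lp_space_diff)
  from norm_le_Lp_norm[OF this, of "(plus a ^^ m) t"] show ?thesis
    using assms(5) by (simp add: weighted_translation_iter_orbit norm_mult del: of_real_prod)
qed

theorem mainTheorem6:
  fixes p :: real and M :: "'g::group_add measure" and a :: 'g
    and \<gamma> :: "nat \<Rightarrow> nat" and w :: "'g \<Rightarrow> real" and F :: "'g set" and N :: nat
  assumes hp: "p \<ge> 1"
    and hM: "discrete_left_haar M"
    and he: "emeasure M {0} \<ge> 1"
    and hgam: "\<not> bdd_above (range \<gamma>)"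
    and hwpos: "\<forall>x. w x > 0"
    and hwbdd: "bdd_above (range w)"
    and hF: "finite F" "F \<noteq> {}"
    and hN: "N > 0"
    and hdisj: "\<forall>n\<ge>N. ((plus a ^^ \<gamma> n) ` F) \<inter> F = {}"
    and hbeta: "Inf {(\<Prod>k=1..\<gamma> n. w ((plus a ^^ k) t)) | n t. n \<ge> N \<and> t \<in> F} > 0"
  shows "\<not> sigma_porous (Lp_space M p) (Lp_dist M p)
           {f \<in> Lp_space M p. \<forall>n\<ge>N.
              Lp_norm M p (\<lambda>x. (weighted_translation a w ^^ \<gamma> n) f x - indicator F x)
                \<ge> measure M F powr (1 / p)}"
    (is "\<not> sigma_porous _ _ ?\<Lambda>")
proof -
  interpret discrete_Lp M p
    using hM he hp by (rule discrete_left_haar_imp_discrete_Lp)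
  obtain W where W: "\<And>x. \<bar>w x\<bar> \<le> W"
    using hwbdd hwpos by (auto simp: bdd_above_def less_imp_le)
  define \<beta> where "\<beta> = Inf {(\<Prod>k=1..\<gamma> n. w ((plus a ^^ k) t)) | n t. n \<ge> N \<and> t \<in> F}"
  have "\<beta> > 0"
    using hbeta by (simp add: \<beta>_def)
  have \<beta>_le: "\<beta> \<le> (\<Prod>k=1..\<gamma> n. w ((plus a ^^ k) t))" if "n \<ge> N" "t \<in> F" for n t
    unfolding \<beta>_def using that hwpos
    by (intro cInf_lower bdd_belowI[of _ 0]) (auto intro!: prod_pos less_imp_le)
  obtain t where "t \<in> F"
    using hF(2) by blast
  define R where "R = measure M F powr (1 / p) / \<beta>"
  have "R \<ge> 0"
    using \<open>\<beta> > 0\<close> by (simp add: R_def)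
  define f0 where "f0 = (\<lambda>x. complex_of_real (R + 1) * indicator {t} x)"
  have "f0 \<in> Lp_space M p"
    unfolding f0_def by (intro Lp_space_cmult Lp_space_indicator_finite[OF hM]) simp
  moreover have "Lp.mball f0 1 \<subseteq> ?\<Lambda>"
  proof (intro subsetI CollectI conjI allI impI)
    fix g assume g: "g \<in> Lp.mball f0 1"
    then show "g \<in> Lp_space M p"
      by simp
    fix n assume "n \<ge> N"
    have "measure M F powr (1 / p) = \<beta> * R"
      using \<open>\<beta> > 0\<close> by (simp add: R_def)
    also have "\<dots> \<le> \<beta> * norm (g t)"
      using norm_gt_if_mem_mball_point_mass[OF g[unfolded f0_def] \<open>R \<ge> 0\<close>] \<open>\<beta> > 0\<close> by simp
    also have "\<dots> \<le> \<bar>\<Prod>k=1..\<gamma> n. w ((plus a ^^ k) t)\<bar> * norm (g t)"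
      using \<beta>_le[OF \<open>n \<ge> N\<close> \<open>t \<in> F\<close>] by (intro mult_right_mono) auto
    also have "\<dots> \<le> Lp_norm M p (\<lambda>x. (weighted_translation a w ^^ \<gamma> n) g x - indicator F x)"
      using hdisj \<open>n \<ge> N\<close> \<open>t \<in> F\<close> g
      by (intro Lp_norm_iter_weighted_translation_diff_indicator_ge[OF discrete_Lp_axioms hM W hF(1)]) auto
    finally show "measure M F powr (1 / p) \<le> Lp_norm M p (\<lambda>x. (weighted_translation a w ^^ \<gamma> n) g x - indicator F x)" .
  qed
  ultimately show ?thesis
    by (intro Lp.not_sigma_porous_if_mball_subset[OF Lp_mcomplete]) auto
qed

end
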